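(* Let $n$ be a positive even integer and let $(a_{i,j})_{1\le i\ne j\le n}$ be a family of real numbers. Choose uniformly at random a subset of exactly $n/2$ indices of $\{1,\dots,n\}$ (sampling without replacement), and set $\varepsilon_i=1$ if $i$ is picked and $\varepsilon_i=-1$ otherwise. Let $$Z=\sum_{i\neq j}\varepsilon_i\varepsilon_j a_{i,j}.$$ Then there exist positive absolute constants $c$ and $C$ (not depending on $n$, on the $a_{i,j}$, or on $x$) such that for all $x>0$, $$\mathbb{P}\Big(Z\ge c\, n\max_{i\ne j}|a_{i,j}|\,(x+\log n)\Big)\le C e^{-x}.$$
   Context: The sum defining $Z$ runs over all ordered pairs $(i,j)$ with $1\le i,j\le n$ and $i\ne j$. The only randomness is the uniform choice of the subset of size $n/2$. *)

theory Defs
  imports "HOL-Probability.Probability"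
begin

definition half_subsets :: "nat \<Rightarrow> nat set set" where
  "half_subsets n = {S. S \<subseteq> {1..n} \<and> card S = n div 2}"

definition eps :: "nat set \<Rightarrow> nat \<Rightarrow> real" where
  "eps S i = (if i \<in> S then 1 else -1)"

definition Zsum :: "nat \<Rightarrow> (nat \<Rightarrow> nat \<Rightarrow> real) \<Rightarrow> nat set \<Rightarrow> real" where
  "Zsum n a S = (\<Sum>i\<in>{1..n}. \<Sum>j\<in>{1..n} - {i}. eps S i * eps S j * a i j)"

definition maxabs :: "nat \<Rightarrow> (nat \<Rightarrow> nat \<Rightarrow> real) \<Rightarrow> real" where
  "maxabs n a = Max {\<bar>a i j\<bar> | i j. i \<in> {1..n} \<and> j \<in> {1..n} \<and> i \<noteq> j}"

end

theory Submission
  imports Defs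
begin

(* Under independent uniform signs (all S in Pow {1..n}), the exponential moment of Z / (8 n M),
   M = max |a_ij|, is at most 14. Conditioning on exactly n/2 positive signs costs at most the factor
   2^n / binom(n, n/2) <= n + 1, which the log n in the threshold absorbs; Markov's inequality then
   gives the tail bound with c = 8 and C = 28.

   The moment bound is by decoupling. Averaging over all T in Pow {1..n} gives 4 * sum_T Z_T = 2^n Z for
   Z_T = sum_{i in T, j notin T} eps_i eps_j a_ij, so by Jensen it suffices to bound exp(mu Z_T) on average.
   Given the signs outside T, Z_T is a Rademacher sum in the signs on T with coefficients
   b_i = sum_{j notin T} eps_j a_ij, so its exponential moment is at most that of mu^2/2 sum_i b_i^2.
   Jensen over i in T reduces this to exp(theta b_i^2) for a single subgaussian b_i, which is summed
   over the layers k s <= |b_i| < (k + 1) s using the Chernoff tail bound. *)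

lemma cosh_le_exp_half_square:
  fixes x :: real
  shows "exp x + exp (- x) \<le> 2 * exp (x\<^sup>2 / 2)"
proof -
  have "exp y + exp (- y) \<le> 2 * exp (y\<^sup>2 / 2)" if "y \<ge> 0" for y :: real
  proof -
    have "ln (1 + 1/2 * (exp (2 * y) - 1)) - 2 * y * (1/2) \<le> (2 * y)\<^sup>2 / 8"
      using Hoeffdings_lemma_aux[of "2 * y" "1/2"] that by simp
    then have "ln ((1 + exp (2 * y)) / 2) \<le> y\<^sup>2 / 2 + y"
      by (simp add: power2_eq_square field_simps)
    then have "(1 + exp (2 * y)) / 2 \<le> exp (y\<^sup>2 / 2 + y)"
      by (metis exp_le_cancel_iff exp_ln add_pos_pos exp_gt_zero half_gt_zero zero_less_one)
    then have "(1 + exp (2 * y)) / 2 * exp (- y) \<le> exp (y\<^sup>2 / 2 + y) * exp (- y)"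
      by (rule mult_right_mono) simp
    then show ?thesis
      by (simp add: field_simps flip: exp_add)
  qed
  from this[of "\<bar>x\<bar>"] show ?thesis
    by (cases "x \<ge> 0") (simp_all add: add.commute)
qed

lemma card_exp_Markov_inequality:
  fixes f :: "'a \<Rightarrow> real"
  assumes "finite P" and "H \<subseteq> P" and "l \<ge> 0"
  shows "real (card {S\<in>H. t \<le> f S}) * exp (l * t) \<le> (\<Sum>S\<in>P. exp (l * f S))"
proof -
  have "real (card {S\<in>H. t \<le> f S}) * exp (l * t) = (\<Sum>S\<in>{S\<in>H. t \<le> f S}. exp (l * t))"
    by simp
  also have "\<dots> \<le> (\<Sum>S\<in>{S\<in>H. t \<le> f S}. exp (l * f S))"
    using assms(3) by (intro sum_mono) (simp add: mult_left_mono)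
  also have "\<dots> \<le> (\<Sum>S\<in>P. exp (l * f S))"
    using assms(1,2) by (intro sum_mono2) auto
  finally show ?thesis .
qed

lemma sum_Pow_exp_signed_sum:
  assumes "finite J"
  shows "(\<Sum>V\<in>Pow J. exp (\<Sum>j\<in>J. eps V j * c j)) = (\<Prod>j\<in>J. exp (c j) + exp (- c j))"
proof -
  have "exp (\<Sum>j\<in>J. eps V j * c j) = (\<Prod>j\<in>V. exp (c j)) * (\<Prod>j\<in>J - V. exp (- c j))"
    if "V \<subseteq> J" for V
  proof -
    have "exp (\<Sum>j\<in>J. eps V j * c j) = (\<Prod>j\<in>J - V. exp (eps V j * c j)) * (\<Prod>j\<in>V. exp (eps V j * c j))"
      using assms that by (simp add: exp_sum prod.subset_diff)
    then show ?thesis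
      by (simp add: eps_def mult.commute)
  qed
  then show ?thesis
    by (simp add: prod_add[OF assms])
qed

lemma sum_Pow_exp_signed_sum_le:
  assumes "finite J"
  shows "(\<Sum>V\<in>Pow J. exp (\<Sum>j\<in>J. eps V j * c j)) \<le> 2 ^ card J * exp ((\<Sum>j\<in>J. (c j)\<^sup>2) / 2)"
proof -
  have "(\<Sum>V\<in>Pow J. exp (\<Sum>j\<in>J. eps V j * c j)) \<le> (\<Prod>j\<in>J. 2 * exp ((c j)\<^sup>2 / 2))"
    unfolding sum_Pow_exp_signed_sum[OF assms]
    by (intro prod_mono) (auto simp: cosh_le_exp_half_square add_nonneg_nonneg)
  also have "\<dots> = 2 ^ card J * exp ((\<Sum>j\<in>J. (c j)\<^sup>2) / 2)"
    by (simp add: prod.distrib exp_sum assms sum_divide_distrib)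
  finally show ?thesis .
qed

lemma card_signed_sum_ge_le:
  assumes J: "finite J" and s: "s > 0" and sq: "(\<Sum>j\<in>J. (a j)\<^sup>2) \<le> s\<^sup>2" and k: "k \<ge> 0"
  shows "real (card {V\<in>Pow J. k * s \<le> (\<Sum>j\<in>J. eps V j * a j)}) \<le> 2 ^ card J * exp (- (k\<^sup>2 / 2))"
proof -
  have "real (card {V\<in>Pow J. k * s \<le> (\<Sum>j\<in>J. eps V j * a j)}) * exp (k / s * (k * s))
      \<le> (\<Sum>V\<in>Pow J. exp (k / s * (\<Sum>j\<in>J. eps V j * a j)))"
    using J s k by (intro card_exp_Markov_inequality) auto
  also have "\<dots> = (\<Sum>V\<in>Pow J. exp (\<Sum>j\<in>J. eps V j * (k / s * a j)))"
    by (simp add: sum_distrib_left mult_ac)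
  also have "\<dots> \<le> 2 ^ card J * exp ((\<Sum>j\<in>J. (k / s * a j)\<^sup>2) / 2)"
    by (rule sum_Pow_exp_signed_sum_le[OF J])
  also have "(\<Sum>j\<in>J. (k / s * a j)\<^sup>2) = (k / s)\<^sup>2 * (\<Sum>j\<in>J. (a j)\<^sup>2)"
    by (simp only: sum_distrib_left power_mult_distrib)
  also have "\<dots> \<le> k\<^sup>2"
    using mult_left_mono[OF sq, of "(k / s)\<^sup>2"] s by (simp add: power_divide)
  finally have "real (card {V\<in>Pow J. k * s \<le> (\<Sum>j\<in>J. eps V j * a j)}) * exp (k\<^sup>2 / 2) * exp (k\<^sup>2 / 2)
      \<le> 2 ^ card J * exp (k\<^sup>2 / 2)"
    using s by (simp add: power2_eq_square mult.assoc flip: exp_add)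
  then have "real (card {V\<in>Pow J. k * s \<le> (\<Sum>j\<in>J. eps V j * a j)}) * exp (k\<^sup>2 / 2) \<le> 2 ^ card J"
    by (rule mult_right_le_imp_le) simp
  then show ?thesis
    by (simp add: exp_minus field_simps)
qed

lemma card_abs_signed_sum_ge_le:
  assumes J: "finite J" and s: "s > 0" and sq: "(\<Sum>j\<in>J. (a j)\<^sup>2) \<le> s\<^sup>2" and k: "k \<ge> 0"
  shows "real (card {V\<in>Pow J. k * s \<le> \<bar>\<Sum>j\<in>J. eps V j * a j\<bar>}) \<le> 2 * 2 ^ card J * exp (- (k\<^sup>2 / 2))"
proof -
  let ?up = "{V\<in>Pow J. k * s \<le> (\<Sum>j\<in>J. eps V j * a j)}"
  let ?down = "{V\<in>Pow J. k * s \<le> (\<Sum>j\<in>J. eps V j * - a j)}"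
  have "{V\<in>Pow J. k * s \<le> \<bar>\<Sum>j\<in>J. eps V j * a j\<bar>} \<subseteq> ?up \<union> ?down"
    by (auto simp: sum_negf abs_if split: if_splits)
  then have "card {V\<in>Pow J. k * s \<le> \<bar>\<Sum>j\<in>J. eps V j * a j\<bar>} \<le> card ?up + card ?down"
    using J by (intro order_trans[OF card_mono card_Un_le]) auto
  moreover have "real (card ?up) \<le> 2 ^ card J * exp (- (k\<^sup>2 / 2))"
    by (rule card_signed_sum_ge_le[OF J s sq k])
  moreover have "real (card ?down) \<le> 2 ^ card J * exp (- (k\<^sup>2 / 2))"
    using sq by (intro card_signed_sum_ge_le[OF J s _ k]) simp
  ultimately show ?thesis
    by linarith
qed

lemma sum_exp_square_le_layers:
  fixes f :: "'a \<Rightarrow> real"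
  assumes P: "finite P" and s: "s > 0" and \<theta>: "\<theta> \<ge> 0"
    and bound: "\<And>S. S \<in> P \<Longrightarrow> \<bar>f S\<bar> \<le> real m * s"
  shows "(\<Sum>S\<in>P. exp (\<theta> * (f S)\<^sup>2))
    \<le> (\<Sum>k\<le>m. exp (\<theta> * ((real k + 1) * s)\<^sup>2) * real (card {S\<in>P. real k * s \<le> \<bar>f S\<bar>}))"
proof -
  have layer: "exp (\<theta> * (f S)\<^sup>2)
      \<le> (\<Sum>k\<le>m. if real k * s \<le> \<bar>f S\<bar> then exp (\<theta> * ((real k + 1) * s)\<^sup>2) else 0)"
    if "S \<in> P" for S
  proof -
    define k where "k = nat \<lfloor>\<bar>f S\<bar> / s\<rfloor>"
    have "real k = of_int \<lfloor>\<bar>f S\<bar> / s\<rfloor>"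
      using s by (simp add: k_def)
    then have "real k \<le> \<bar>f S\<bar> / s" and "\<bar>f S\<bar> / s < real k + 1"
      by linarith+
    then have lower: "real k * s \<le> \<bar>f S\<bar>" and upper: "\<bar>f S\<bar> < (real k + 1) * s"
      using s by (simp_all add: field_simps)
    have "k \<le> m"
      using order_trans[OF lower bound[OF that]] s by simp
    have "(f S)\<^sup>2 \<le> ((real k + 1) * s)\<^sup>2"
      using upper power_mono[of "\<bar>f S\<bar>" "(real k + 1) * s" 2] by simp
    then have "exp (\<theta> * (f S)\<^sup>2) \<le> exp (\<theta> * ((real k + 1) * s)\<^sup>2)"
      using \<theta> by (simp add: mult_left_mono)
    also have "\<dots> \<le> (\<Sum>k\<le>m. if real k * s \<le> \<bar>f S\<bar> then exp (\<theta> * ((real k + 1) * s)\<^sup>2) else 0)"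
      using member_le_sum[of k "{..m}" "\<lambda>k. if real k * s \<le> \<bar>f S\<bar> then exp (\<theta> * ((real k + 1) * s)\<^sup>2) else 0"]
        \<open>k \<le> m\<close> lower by simp
    finally show ?thesis .
  qed
  have "(\<Sum>S\<in>P. exp (\<theta> * (f S)\<^sup>2))
      \<le> (\<Sum>S\<in>P. \<Sum>k\<le>m. if real k * s \<le> \<bar>f S\<bar> then exp (\<theta> * ((real k + 1) * s)\<^sup>2) else 0)"
    by (intro sum_mono layer)
  also have "\<dots> = (\<Sum>k\<le>m. \<Sum>S\<in>P. if real k * s \<le> \<bar>f S\<bar> then exp (\<theta> * ((real k + 1) * s)\<^sup>2) else 0)"
    by (rule sum.swap)
  also have "\<dots> = (\<Sum>k\<le>m. exp (\<theta> * ((real k + 1) * s)\<^sup>2) * real (card {S\<in>P. real k * s \<le> \<bar>f S\<bar>}))"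
    using P by (simp add: sum.If_cases Int_def conj_commute mult.commute)
  finally show ?thesis .
qed

lemma exp_square_layer_le:
  fixes \<theta> s :: real
  assumes "\<theta> * s\<^sup>2 \<le> 1/8"
  shows "exp (\<theta> * ((real k + 1) * s)\<^sup>2) * exp (- ((real k)\<^sup>2 / 2)) \<le> exp (1/4) * exp (- 1/4) ^ k"
proof -
  have "0 \<le> (3 * real k - 1) * (real k - 1)"
    by (cases "k = 0") (auto intro: mult_nonneg_nonneg)
  moreover have "\<theta> * ((real k + 1) * s)\<^sup>2 \<le> (real k + 1)\<^sup>2 / 8"
    using mult_right_mono[OF assms, of "(real k + 1)\<^sup>2"] by (simp add: power_mult_distrib mult_ac)
  ultimately have "\<theta> * ((real k + 1) * s)\<^sup>2 - (real k)\<^sup>2 / 2 \<le> 1/4 + real k * (- 1/4)"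
    by (simp add: power2_eq_square algebra_simps)
  then show ?thesis
    by (simp add: exp_add[symmetric] exp_of_nat_mult[symmetric])
qed

lemma sum_exp_quarter_geometric_le: "2 * exp (1/4) * (\<Sum>k\<le>m. exp (- 1/4) ^ k) \<le> (14 :: real)"
proof -
  define q :: real where "q = exp (- 1/4)"
  have "3/4 \<le> q" and "5/4 \<le> exp (1/4 :: real)"
    using exp_ge_add_one_self[of "- 1/4"] exp_ge_add_one_self[of "1/4"] by (simp_all add: q_def)
  moreover have "q * exp (1/4) = 1"
    by (simp add: q_def flip: exp_add)
  ultimately have e: "exp (1/4) \<le> (4/3 :: real)" and q: "q \<le> 4/5"
    using mult_right_mono[of "3/4" q "exp (1/4)"] mult_left_mono[of "5/4" "exp (1/4)" q]
    by (simp_all add: q_def)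
  have "(\<Sum>k\<le>m. q ^ k) \<le> 1 / (1 - q)"
    using sum_le_suminf[of "\<lambda>k. q ^ k" "{..m}"] suminf_geometric[of q] by (auto simp: q_def)
  also have "\<dots> \<le> 5"
    using q by (simp add: field_simps)
  finally have "exp (1/4) * (\<Sum>k\<le>m. q ^ k) \<le> 4/3 * 5"
    using e by (intro mult_mono) (simp_all add: sum_nonneg q_def)
  then show ?thesis
    by (simp add: q_def)
qed

lemma sum_Pow_exp_square_signed_sum_le:
  assumes J: "finite J" and s: "s > 0" and sq: "(\<Sum>j\<in>J. (a j)\<^sup>2) \<le> s\<^sup>2"
    and \<theta>: "\<theta> \<ge> 0" and \<theta>s: "\<theta> * s\<^sup>2 \<le> 1/8"
  shows "(\<Sum>V\<in>Pow J. exp (\<theta> * (\<Sum>j\<in>J. eps V j * a j)\<^sup>2)) \<le> 14 * 2 ^ card J"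
proof -
  define b where "b V = (\<Sum>j\<in>J. eps V j * a j)" for V
  obtain m :: nat where m: "(\<Sum>j\<in>J. \<bar>a j\<bar>) / s \<le> m"
    using real_arch_simple by blast
  have "\<bar>b V\<bar> \<le> real m * s" for V
  proof -
    have "\<bar>b V\<bar> \<le> (\<Sum>j\<in>J. \<bar>eps V j * a j\<bar>)"
      unfolding b_def by (rule sum_abs)
    also have "\<dots> = (\<Sum>j\<in>J. \<bar>a j\<bar>)"
      by (rule sum.cong) (auto simp: eps_def abs_mult)
    also have "\<dots> \<le> real m * s"
      using m s by (simp add: field_simps)
    finally show ?thesis .
  qed
  then have "(\<Sum>V\<in>Pow J. exp (\<theta> * (b V)\<^sup>2))
      \<le> (\<Sum>k\<le>m. exp (\<theta> * ((real k + 1) * s)\<^sup>2) * real (card {V\<in>Pow J. real k * s \<le> \<bar>b V\<bar>}))"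
    using J s \<theta> by (intro sum_exp_square_le_layers) auto
  also have "\<dots> \<le> (\<Sum>k\<le>m. exp (\<theta> * ((real k + 1) * s)\<^sup>2) * (2 * 2 ^ card J * exp (- ((real k)\<^sup>2 / 2))))"
    unfolding b_def by (intro sum_mono mult_left_mono card_abs_signed_sum_ge_le[OF J s sq]) auto
  also have "\<dots> \<le> (\<Sum>k\<le>m. 2 * 2 ^ card J * (exp (1/4) * exp (- 1/4) ^ k))"
    using exp_square_layer_le[OF \<theta>s] by (intro sum_mono) (simp add: mult_left_mono mult_ac)
  also have "\<dots> = 2 ^ card J * (2 * exp (1/4) * (\<Sum>k\<le>m. exp (- 1/4) ^ k))"
    by (simp add: sum_distrib_left mult_ac)
  also have "\<dots> \<le> 14 * 2 ^ card J"
    using sum_exp_quarter_geometric_le[of m] by simp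
  finally show ?thesis
    by (simp add: b_def)
qed

lemma exp_mean_le_mean_exp:
  assumes "finite A" and "A \<noteq> {}"
  shows "exp ((\<Sum>x\<in>A. f x) / card A) \<le> (\<Sum>x\<in>A. exp (f x)) / card A"
proof -
  have "card A > 0"
    using assms by (simp add: card_gt_0_iff)
  then have "exp (\<Sum>x\<in>A. (1 / card A) *\<^sub>R f x) \<le> (\<Sum>x\<in>A. (1 / card A) * exp (f x))"
    by (intro convex_on_sum[OF assms exp_convex]) auto
  then show ?thesis
    by (simp add: sum_divide_distrib[symmetric] sum_distrib_left[symmetric])
qed

lemma sum_Pow_Un_disjoint:
  assumes "A \<inter> B = {}"
  shows "(\<Sum>S\<in>Pow (A \<union> B). f S) = (\<Sum>U\<in>Pow A. \<Sum>V\<in>Pow B. f (U \<union> V))"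
proof -
  have "bij_betw (\<lambda>(U, V). U \<union> V) (Pow A \<times> Pow B) (Pow (A \<union> B))"
    by (rule bij_betwI[where g = "\<lambda>S. (S \<inter> A, S \<inter> B)"]) (use assms in auto)
  then show ?thesis
    by (simp add: sum.reindex_bij_betw[symmetric] sum.cartesian_product split_def)
qed

lemma card_Pow_mem_not_mem:
  assumes "finite N" and "i \<in> N" and "j \<in> N" and "i \<noteq> j"
  shows "card {T\<in>Pow N. i \<in> T \<and> j \<notin> T} = 2 ^ (card N - 2)"
proof -
  have "bij_betw (insert i) (Pow (N - {i, j})) {T\<in>Pow N. i \<in> T \<and> j \<notin> T}"
    by (rule bij_betwI[where g = "\<lambda>T. T - {i}"]) (use assms in auto)
  then have "card {T\<in>Pow N. i \<in> T \<and> j \<notin> T} = 2 ^ card (N - {i, j})"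
    using assms(1) by (simp add: bij_betw_same_card[symmetric] card_Pow)
  then show ?thesis
    using assms by (simp add: card_Diff_subset)
qed

lemma sum_Pow_cross_sum:
  fixes g :: "'a \<Rightarrow> 'a \<Rightarrow> real"
  assumes N: "finite N"
  shows "4 * (\<Sum>T\<in>Pow N. \<Sum>i\<in>T. \<Sum>j\<in>N - T. g i j) = 2 ^ card N * (\<Sum>i\<in>N. \<Sum>j\<in>N - {i}. g i j)"
proof -
  have cross: "(\<Sum>i\<in>T. \<Sum>j\<in>N - T. g i j)
      = (\<Sum>i\<in>N. \<Sum>j\<in>N - {i}. if i \<in> T \<and> j \<notin> T then g i j else 0)" if "T \<subseteq> N" for T
  proof -
    have "(\<Sum>j\<in>N - {i}. if i \<in> T \<and> j \<notin> T then g i j else 0)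
        = (if i \<in> T then \<Sum>j\<in>N - T. g i j else 0)" for i
      using N by (auto simp: sum.If_cases intro!: sum.cong)
    then show ?thesis
      using N that by (simp add: sum.If_cases Int_absorb1)
  qed
  have "(\<Sum>T\<in>Pow N. \<Sum>i\<in>T. \<Sum>j\<in>N - T. g i j)
      = (\<Sum>i\<in>N. \<Sum>j\<in>N - {i}. \<Sum>T\<in>Pow N. if i \<in> T \<and> j \<notin> T then g i j else 0)"
    by (simp add: cross sum.swap[of _ "Pow N"])
  also have "\<dots> = (\<Sum>i\<in>N. \<Sum>j\<in>N - {i}. 2 ^ (card N - 2) * g i j)"
    using N card_Pow_mem_not_mem[OF N] by (intro sum.cong refl) (auto simp: sum.If_cases Int_def)
  finally have "(\<Sum>T\<in>Pow N. \<Sum>i\<in>T. \<Sum>j\<in>N - T. g i j) = 2 ^ (card N - 2) * (\<Sum>i\<in>N. \<Sum>j\<in>N - {i}. g i j)"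
    by (simp add: sum_distrib_left)
  moreover have "(\<Sum>i\<in>N. \<Sum>j\<in>N - {i}. g i j) = 0" if "card N < 2"
    using card_le_Suc0_iff_eq[OF N] that by (intro sum.neutral ballI) auto
  moreover have "4 * 2 ^ (card N - 2) = (2::real) ^ card N" if "\<not> card N < 2"
    using that by (simp add: power_diff)
  ultimately show ?thesis
    by (cases "card N < 2") simp_all
qed

lemma sum_Pow_exp_decoupled_le:
  fixes a :: "nat \<Rightarrow> nat \<Rightarrow> real"
  assumes T: "finite T" and TR: "T \<inter> R = {}"
  shows "(\<Sum>S\<in>Pow (T \<union> R). exp (\<Sum>i\<in>T. \<Sum>j\<in>R. eps S i * eps S j * a i j))
    \<le> 2 ^ card T * (\<Sum>V\<in>Pow R. exp ((\<Sum>i\<in>T. (\<Sum>j\<in>R. eps V j * a i j)\<^sup>2) / 2))"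
proof -
  have split: "(\<Sum>i\<in>T. \<Sum>j\<in>R. eps (U \<union> V) i * eps (U \<union> V) j * a i j)
      = (\<Sum>i\<in>T. eps U i * (\<Sum>j\<in>R. eps V j * a i j))" if "U \<subseteq> T" and "V \<subseteq> R" for U V
  proof -
    have "eps (U \<union> V) i = eps U i" if "i \<in> T" for i
      using that \<open>V \<subseteq> R\<close> TR by (auto simp: eps_def)
    moreover have "eps (U \<union> V) j = eps V j" if "j \<in> R" for j
      using that \<open>U \<subseteq> T\<close> TR by (auto simp: eps_def)
    ultimately show ?thesis
      by (simp add: sum_distrib_left mult_ac)
  qed
  have "(\<Sum>S\<in>Pow (T \<union> R). exp (\<Sum>i\<in>T. \<Sum>j\<in>R. eps S i * eps S j * a i j))
      = (\<Sum>V\<in>Pow R. \<Sum>U\<in>Pow T. exp (\<Sum>i\<in>T. eps U i * (\<Sum>j\<in>R. eps V j * a i j)))"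
    unfolding sum_Pow_Un_disjoint[OF TR] sum.swap[of _ "Pow T"] by (intro sum.cong refl) (simp add: split)
  also have "\<dots> \<le> (\<Sum>V\<in>Pow R. 2 ^ card T * exp ((\<Sum>i\<in>T. (\<Sum>j\<in>R. eps V j * a i j)\<^sup>2) / 2))"
    by (intro sum_mono sum_Pow_exp_signed_sum_le[OF T])
  finally show ?thesis
    by (simp add: sum_distrib_left)
qed

lemma sum_Pow_exp_decoupled_chaos_le:
  fixes a :: "nat \<Rightarrow> nat \<Rightarrow> real" and s :: real
  assumes T: "finite T" and R: "finite R" and TR: "T \<inter> R = {}" and s: "s > 0"
    and row: "\<And>i. i \<in> T \<Longrightarrow> (\<Sum>j\<in>R. (a i j)\<^sup>2) \<le> s\<^sup>2" and Ts: "real (card T) * s\<^sup>2 \<le> 1/4"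
  shows "(\<Sum>S\<in>Pow (T \<union> R). exp (\<Sum>i\<in>T. \<Sum>j\<in>R. eps S i * eps S j * a i j)) \<le> 14 * 2 ^ card (T \<union> R)"
proof (cases "T = {}")
  case True
  then show ?thesis
    using R by (simp add: card_Pow)
next
  case False
  define b where "b i V = (\<Sum>j\<in>R. eps V j * a i j)" for i V
  define \<theta> where "\<theta> = real (card T) / 2"
  have cT: "card T > 0"
    using T False by (simp add: card_gt_0_iff)
  have "(\<Sum>S\<in>Pow (T \<union> R). exp (\<Sum>i\<in>T. \<Sum>j\<in>R. eps S i * eps S j * a i j))
      \<le> 2 ^ card T * (\<Sum>V\<in>Pow R. exp ((\<Sum>i\<in>T. (b i V)\<^sup>2) / 2))"
    unfolding b_def by (rule sum_Pow_exp_decoupled_le[OF T TR])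
  also have "\<dots> \<le> 2 ^ card T * (\<Sum>V\<in>Pow R. (\<Sum>i\<in>T. exp (\<theta> * (b i V)\<^sup>2)) / card T)"
  proof (intro mult_left_mono sum_mono)
    fix V
    have "(\<Sum>i\<in>T. (b i V)\<^sup>2) / 2 = (\<Sum>i\<in>T. \<theta> * (b i V)\<^sup>2) / card T"
      unfolding \<theta>_def sum_distrib_left[symmetric] using cT by simp
    then show "exp ((\<Sum>i\<in>T. (b i V)\<^sup>2) / 2) \<le> (\<Sum>i\<in>T. exp (\<theta> * (b i V)\<^sup>2)) / card T"
      using exp_mean_le_mean_exp[OF T False] by simp
  qed simp
  also have "\<dots> = 2 ^ card T / card T * (\<Sum>i\<in>T. \<Sum>V\<in>Pow R. exp (\<theta> * (b i V)\<^sup>2))"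
    by (simp add: sum_distrib_left sum_divide_distrib[symmetric] sum.swap[of _ T] mult_ac)
  also have "\<dots> \<le> 2 ^ card T / card T * (\<Sum>i\<in>T. 14 * 2 ^ card R)"
    unfolding b_def using R s Ts row
    by (intro mult_left_mono sum_mono sum_Pow_exp_square_signed_sum_le) (auto simp: \<theta>_def)
  also have "\<dots> = 14 * 2 ^ card (T \<union> R)"
    using T R TR False by (simp add: card_Un_disjoint power_add)
  finally show ?thesis .
qed

lemma sum_Pow_exp_cut_le:
  fixes a :: "nat \<Rightarrow> nat \<Rightarrow> real" and M :: real
  assumes N: "finite N" and TN: "T \<subseteq> N" and M: "M > 0"
    and bound: "\<And>i j. i \<in> T \<Longrightarrow> j \<in> N - T \<Longrightarrow> \<bar>a i j\<bar> \<le> M"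
  shows "(\<Sum>S\<in>Pow N. exp ((\<Sum>i\<in>T. \<Sum>j\<in>N - T. eps S i * eps S j * a i j) / (2 * real (card N) * M)))
    \<le> 14 * 2 ^ card N"
proof (cases "N = {}")
  case True
  then show ?thesis
    by simp
next
  case False
  define n where "n = card N"
  define \<mu> where "\<mu> = 1 / (2 * real n * M)"
  define s where "s = \<mu> * M * sqrt n"
  have n: "n > 0"
    using N False by (simp add: n_def card_gt_0_iff)
  have \<mu>: "\<mu> > 0"
    using n M by (simp add: \<mu>_def)
  have "(\<Sum>j\<in>N - T. (\<mu> * a i j)\<^sup>2) \<le> s\<^sup>2" if "i \<in> T" for i
  proof -
    have "(\<mu> * a i j)\<^sup>2 \<le> (\<mu> * M)\<^sup>2" if "j \<in> N - T" for j
      using bound[OF \<open>i \<in> T\<close> that] \<mu> M by (simp add: abs_le_square_iff[symmetric] abs_mult)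
    then have "(\<Sum>j\<in>N - T. (\<mu> * a i j)\<^sup>2) \<le> (\<Sum>j\<in>N - T. (\<mu> * M)\<^sup>2)"
      by (rule sum_mono)
    also have "\<dots> \<le> n * (\<mu> * M)\<^sup>2"
      using N card_mono[OF N, of "N - T"] by (simp add: n_def mult_right_mono)
    finally show ?thesis
      by (simp add: s_def power_mult_distrib mult_ac)
  qed
  moreover have "real (card T) * s\<^sup>2 \<le> 1/4"
  proof -
    have "real (card T) * s\<^sup>2 \<le> real n * s\<^sup>2"
      using card_mono[OF N TN] by (intro mult_right_mono) (simp_all add: n_def)
    also have "\<dots> = 1/4"
      using n M by (simp add: s_def \<mu>_def power_mult_distrib power2_eq_square field_simps)
    finally show ?thesis .
  qed
  moreover have "s > 0"
    using n M \<mu> by (simp add: s_def)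
  ultimately have "(\<Sum>S\<in>Pow (T \<union> (N - T)). exp (\<Sum>i\<in>T. \<Sum>j\<in>N - T. eps S i * eps S j * (\<mu> * a i j)))
      \<le> 14 * 2 ^ card (T \<union> (N - T))"
    using finite_subset[OF TN N] N by (intro sum_Pow_exp_decoupled_chaos_le[where s = s]) auto
  then show ?thesis
    using TN by (simp add: Un_absorb1 \<mu>_def n_def sum_distrib_left sum_divide_distrib mult_ac)
qed

lemma sum_Pow_exp_chaos_le:
  fixes a :: "nat \<Rightarrow> nat \<Rightarrow> real" and M :: real
  assumes N: "finite N" and M: "M > 0"
    and bound: "\<And>i j. i \<in> N \<Longrightarrow> j \<in> N \<Longrightarrow> i \<noteq> j \<Longrightarrow> \<bar>a i j\<bar> \<le> M"
  shows "(\<Sum>S\<in>Pow N. exp ((\<Sum>i\<in>N. \<Sum>j\<in>N - {i}. eps S i * eps S j * a i j) / (8 * real (card N) * M)))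
    \<le> 14 * 2 ^ card N"
proof -
  define n where "n = card N"
  define Z where "Z T S = (\<Sum>i\<in>T. \<Sum>j\<in>N - T. eps S i * eps S j * a i j) / (2 * real n * M)" for T S
  have "exp ((\<Sum>i\<in>N. \<Sum>j\<in>N - {i}. eps S i * eps S j * a i j) / (8 * real n * M))
      \<le> (\<Sum>T\<in>Pow N. exp (Z T S)) / 2 ^ n" for S
  proof -
    have "(\<Sum>T\<in>Pow N. Z T S) / 2 ^ n
        = 4 * (\<Sum>T\<in>Pow N. \<Sum>i\<in>T. \<Sum>j\<in>N - T. eps S i * eps S j * a i j) / (2 ^ n * (8 * real n * M))"
      by (simp add: Z_def sum_divide_distrib[symmetric])
    also have "\<dots> = (\<Sum>i\<in>N. \<Sum>j\<in>N - {i}. eps S i * eps S j * a i j) / (8 * real n * M)"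
      unfolding sum_Pow_cross_sum[OF N] by (simp add: n_def)
    finally show ?thesis
      using exp_mean_le_mean_exp[of "Pow N" "\<lambda>T. Z T S"] N by (simp add: card_Pow n_def Pow_not_empty)
  qed
  then have "(\<Sum>S\<in>Pow N. exp ((\<Sum>i\<in>N. \<Sum>j\<in>N - {i}. eps S i * eps S j * a i j) / (8 * real n * M)))
      \<le> (\<Sum>S\<in>Pow N. (\<Sum>T\<in>Pow N. exp (Z T S)) / 2 ^ n)"
    by (rule sum_mono)
  also have "\<dots> = (\<Sum>T\<in>Pow N. \<Sum>S\<in>Pow N. exp (Z T S)) / 2 ^ n"
    by (simp only: sum_divide_distrib[symmetric]) (subst sum.swap, rule refl)
  also have "\<dots> \<le> (\<Sum>T\<in>Pow N. 14 * 2 ^ n) / 2 ^ n"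
  proof (intro divide_right_mono sum_mono)
    fix T assume "T \<in> Pow N"
    then show "(\<Sum>S\<in>Pow N. exp (Z T S)) \<le> 14 * 2 ^ n"
      unfolding Z_def n_def using N M bound by (intro sum_Pow_exp_cut_le) auto
  qed simp
  also have "\<dots> = 14 * 2 ^ n"
    using N by (simp add: card_Pow n_def)
  finally show ?thesis
    by (simp add: n_def)
qed

lemma abs_le_maxabs:
  assumes "i \<in> {1..n}" and "j \<in> {1..n}" and "i \<noteq> j"
  shows "\<bar>a i j\<bar> \<le> maxabs n a"
proof -
  have "finite {\<bar>a i j\<bar> | i j. i \<in> {1..n} \<and> j \<in> {1..n} \<and> i \<noteq> j}"
    by (rule finite_subset[of _ "(\<lambda>(i, j). \<bar>a i j\<bar>) ` ({1..n} \<times> {1..n})"]) auto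
  then show ?thesis
    unfolding maxabs_def by (rule Max_ge) (use assms in blast)
qed

lemma two_power_le_Suc_mult_card_half_subsets: "2 ^ n \<le> (n + 1) * card (half_subsets n)"
proof -
  have "card (half_subsets n) = n choose (n div 2)"
    using n_subsets[of "{1..n}" "n div 2"] by (simp add: half_subsets_def)
  moreover have "(\<Sum>k\<le>n. n choose k) \<le> (\<Sum>k\<le>n. n choose (n div 2))"
    by (intro sum_mono binomial_maximum)
  ultimately show ?thesis
    by (simp add: choose_row_sum)
qed

lemma prob_Zsum_ge_le:
  assumes n: "n > 0" and M: "maxabs n a > 0"
  shows "measure_pmf.prob (pmf_of_set (half_subsets n))
      {S. Zsum n a S \<ge> 8 * real n * maxabs n a * (x + ln (real n))} \<le> 28 * exp (- x)"
proof -
  define H where "H = half_subsets n"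
  define l where "l = 1 / (8 * real n * maxabs n a)"
  let ?E = "{S\<in>H. 8 * real n * maxabs n a * (x + ln (real n)) \<le> Zsum n a S}"
  have H: "finite H" "H \<subseteq> Pow {1..n}"
    using finite_subset[of H "Pow {1..n}"] by (auto simp: H_def half_subsets_def)
  have cH: "card H > 0"
    using two_power_le_Suc_mult_card_half_subsets[of n] by (intro gr0I) (simp add: H_def)
  have "real n * (real (card ?E) * exp x) = real (card ?E) * exp (l * (8 * real n * maxabs n a * (x + ln (real n))))"
    using n M by (simp add: l_def exp_add)
  also have "\<dots> \<le> (\<Sum>S\<in>Pow {1..n}. exp (l * Zsum n a S))"
    using H M by (intro card_exp_Markov_inequality) (auto simp: l_def)
  also have "\<dots> \<le> 14 * 2 ^ n"
    using sum_Pow_exp_chaos_le[of "{1..n}" "maxabs n a" a] M abs_le_maxabs[of _ n _ a]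
    by (simp add: Zsum_def l_def mult_ac)
  also have "\<dots> \<le> 14 * ((real n + 1) * card H)"
    using two_power_le_Suc_mult_card_half_subsets[of n, THEN of_nat_mono[where 'a = real]]
    by (simp add: H_def distrib_right)
  also have "\<dots> \<le> real n * (28 * card H)"
    using n mult_right_mono[of 1 "real n" "real (card H)"] by (simp add: algebra_simps)
  finally have "real (card ?E) \<le> 28 * exp (- x) * card H"
    using n by (simp add: exp_minus divide_simps)
  moreover have "H \<noteq> {}"
    using cH by auto
  ultimately show ?thesis
    using H cH by (simp add: measure_pmf_of_set H_def Int_def pos_divide_le_eq)
qed

theorem theorem1:
  shows "\<exists>c>0. \<exists>C>0. \<forall>(n::nat) (a::nat \<Rightarrow> nat \<Rightarrow> real) (x::real).
    n > 0 \<longrightarrow> even n \<longrightarrow> maxabs n a > 0 \<longrightarrow> x > 0 \<longrightarrow>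
    measure_pmf.prob (pmf_of_set (half_subsets n))
      {S. Zsum n a S \<ge> c * real n * maxabs n a * (x + ln (real n))} \<le> C * exp (- x)"
  by (rule exI[of _ 8], intro conjI exI[of _ 28] allI impI) (simp_all add: prob_Zsum_ge_le)

end
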